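(* Let $f:V\to W$ be a smooth map between finite-dimensional real inner product spaces, $r\ge0$, and $\omega$ a $k$-form on $W$ with $|\omega|^{\natural_r}<\infty$. Then $|f^*\omega|^{\natural_r}\le|f|_{[r]}\,|\omega|^{\natural_r}$.
   Context: For a simple $k$-vector $\alpha=w_1\wedge\dots\wedge w_k$, $M(\alpha)=\sqrt{\det\langle w_i,w_j\rangle}$. A monopolar $k$-chain in $V$ is a finite formal sum $\sum_i(p_i;\alpha_i)$, $p_i\in V$, $\alpha_i\in\Lambda_k(V)$, linear in the second slot at each point. $T_u(p;\alpha)=(p+u;\alpha)$, $\Delta_u=T_u-\mathrm{id}$, $\Delta^j_U=\Delta_{u_1}\circ\dots\circ\Delta_{u_j}$ for $U=(u_1,\dots,u_j)$, $\|\Delta^j_U(p;\alpha)\|_j=|u_1|\cdots|u_j|M(\alpha)$. A $k$-form is a linear functional $\omega$ on monopolar $k$-chains; $\|\omega\|_0=\sup\{|\omega(p;\alpha)|:\alpha$ simple, $M(\alpha)=1\}$, $\|\omega\|_j=\sup\{|\omega(\Delta^j_U(p;\alpha))|:\|\Delta^j_U(p;\alpha)\|_j=1\}$, $|\omega|^{\natural_r}=\max_{0\le j\le r}\|\omega\|_j$, $\mathcal B_k^r$ = forms with finite $|\omega|^{\natural_r}$. For a chain $P$, $|P|^{\natural_r}=\sup_{0\ne\omega\in\mathcal B_k^r}\omega(P)/|\omega|^{\natural_r}$. Pushforward: $f_*(x;v_1\wedge\dots\wedge v_k)=(f(x);Df_x v_1\wedge\dots\wedge Df_xv_k)$, extended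 linearly. $\|f\|_{[j]}=\sup|f_*\Delta^j_U(x;\alpha)|^{\natural_j}/\|\Delta^j_U(x;\alpha)\|_j$ over $x$, nonzero $U$ and nonzero simple $\alpha$, and $|f|_{[r]}=\max\{\|f\|_{[0]},\dots,\|f\|_{[r]}\}$. Pullback: $f^*\omega(x;\alpha)=\omega(f_*(x;\alpha))$. *)

theory Defs
  imports "HOL-Analysis.Analysis" "HOL-Combinatorics.Permutations"
begin

text \<open>C-infinity smoothness: there is a family of iterated derivatives D n x us
  (the n-th derivative at x applied to the directions us 0, ..., us (n-1)),
  with D 0 = f, such that each x -> D n x us is Frechet differentiable with
  derivative h -> D (n+1) x (us(n := h)).\<close>
definition smooth_map :: "('a::real_normed_vector \<Rightarrow> 'b::real_normed_vector) \<Rightarrow> bool" where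
  "smooth_map f \<longleftrightarrow> (\<exists>D :: nat \<Rightarrow> 'a \<Rightarrow> (nat \<Rightarrow> 'a) \<Rightarrow> 'b.
      (\<forall>x us. D 0 x us = f x) \<and>
      (\<forall>n x us. ((\<lambda>y. D n y us) has_derivative (\<lambda>h. D (Suc n) x (us(n := h)))) (at x)))"

text \<open>Gram determinant det (w_i . w_j)_{i,j<k} (Leibniz formula) and the mass
  M(c w_0 /\ ... /\ w_(k-1)) = |c| sqrt(det Gram) of a simple k-vector.\<close>
definition gram_det :: "nat \<Rightarrow> (nat \<Rightarrow> 'a::real_inner) \<Rightarrow> real" where
  "gram_det k ws = (\<Sum>\<sigma> | \<sigma> permutes {..<k}. of_int (sign \<sigma>) * (\<Prod>i<k. inner (ws i) (ws (\<sigma> i))))"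

definition mass :: "nat \<Rightarrow> real \<Rightarrow> (nat \<Rightarrow> 'a::real_inner) \<Rightarrow> real" where
  "mass k c ws = \<bar>c\<bar> * sqrt (gram_det k ws)"

text \<open>A monopolar k-chain: finite formal sum of terms c (p; w_0 /\ ... /\ w_(k-1)).\<close>
type_synonym 'a chain = "(real \<times> 'a \<times> (nat \<Rightarrow> 'a)) list"

text \<open>A k-form: at every point an alternating k-linear functional
  (equivalently a linear functional on Lambda_k), i.e. a linear functional on chains.\<close>
definition is_kform :: "nat \<Rightarrow> ('a::real_vector \<Rightarrow> (nat \<Rightarrow> 'a) \<Rightarrow> real) \<Rightarrow> bool" where
  "is_kform k \<omega> \<longleftrightarrow> (\<forall>p.
      (\<forall>ws ws'. (\<forall>i<k. ws i = ws' i) \<longrightarrow> \<omega> p ws = \<omega> p ws') \<and>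
      (\<forall>ws i. i < k \<longrightarrow> linear (\<lambda>v. \<omega> p (ws(i := v)))) \<and>
      (\<forall>ws i j. i < k \<and> j < k \<and> i \<noteq> j \<and> ws i = ws j \<longrightarrow> \<omega> p ws = 0))"

definition chain_eval :: "('a \<Rightarrow> (nat \<Rightarrow> 'a) \<Rightarrow> real) \<Rightarrow> 'a chain \<Rightarrow> real" where
  "chain_eval \<omega> P = (\<Sum>(c, p, ws)\<leftarrow>P. c * \<omega> p ws)"

definition translate :: "'a::plus \<Rightarrow> 'a chain \<Rightarrow> 'a chain" where
  "translate u P = map (\<lambda>(c, p, ws). (c, p + u, ws)) P"

definition chain_neg :: "'a chain \<Rightarrow> 'a chain" where
  "chain_neg P = map (\<lambda>(c, p, ws). (- c, p, ws)) P"

definition diff_op :: "'a::plus \<Rightarrow> 'a chain \<Rightarrow> 'a chain" where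
  "diff_op u P = translate u P @ chain_neg P"

definition delta :: "'a::plus list \<Rightarrow> 'a chain \<Rightarrow> 'a chain" where
  "delta U P = foldr diff_op U P"

definition dnorm :: "nat \<Rightarrow> 'a::real_inner list \<Rightarrow> real \<Rightarrow> (nat \<Rightarrow> 'a) \<Rightarrow> real" where
  "dnorm k U c ws = (\<Prod>u\<leftarrow>U. norm u) * mass k c ws"

text \<open>||omega||_j (for j = 0 this is ||omega||_0). Sups are taken in ereal,
  with the convention sup of the empty set = 0 (all quantities are nonnegative).\<close>
definition form_seminorm :: "nat \<Rightarrow> nat \<Rightarrow> ('a::real_inner \<Rightarrow> (nat \<Rightarrow> 'a) \<Rightarrow> real) \<Rightarrow> ereal" where
  "form_seminorm k j \<omega> = Sup (insert 0
      {ereal \<bar>chain_eval \<omega> (delta U [(c, p, ws)])\<bar> | U p c ws.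
         length U = j \<and> dnorm k U c ws = 1})"

definition natural_norm :: "nat \<Rightarrow> nat \<Rightarrow> ('a::real_inner \<Rightarrow> (nat \<Rightarrow> 'a) \<Rightarrow> real) \<Rightarrow> ereal" where
  "natural_norm k r \<omega> = Max ((\<lambda>j. form_seminorm k j \<omega>) ` {..r})"

definition chain_norm :: "nat \<Rightarrow> nat \<Rightarrow> 'a::real_inner chain \<Rightarrow> ereal" where
  "chain_norm k r P = Sup (insert 0
      {ereal (chain_eval \<omega> P / real_of_ereal (natural_norm k r \<omega>)) | \<omega>.
         is_kform k \<omega> \<and> natural_norm k r \<omega> < \<infinity> \<and> (\<exists>p ws. \<omega> p ws \<noteq> 0)})"

definition Dmap :: "('a::real_normed_vector \<Rightarrow> 'b::real_normed_vector) \<Rightarrow> 'a \<Rightarrow> 'a \<Rightarrow> 'b" where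
  "Dmap f x = frechet_derivative f (at x)"

definition push :: "('a::real_normed_vector \<Rightarrow> 'b::real_normed_vector) \<Rightarrow> 'a chain \<Rightarrow> 'b chain" where
  "push f P = map (\<lambda>(c, p, ws). (c, f p, \<lambda>i. Dmap f p (ws i))) P"

definition pullback :: "('a::real_normed_vector \<Rightarrow> 'b::real_normed_vector) \<Rightarrow>
    ('b \<Rightarrow> (nat \<Rightarrow> 'b) \<Rightarrow> real) \<Rightarrow> ('a \<Rightarrow> (nat \<Rightarrow> 'a) \<Rightarrow> real)" where
  "pullback f \<omega> = (\<lambda>x ws. \<omega> (f x) (\<lambda>i. Dmap f x (ws i)))"

definition map_seminorm :: "nat \<Rightarrow> nat \<Rightarrow> ('a::real_inner \<Rightarrow> 'b::real_inner) \<Rightarrow> ereal" where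
  "map_seminorm k j f = Sup (insert 0
      {chain_norm k j (push f (delta U [(c, x, ws)])) / ereal (dnorm k U c ws) | U x c ws.
         length U = j \<and> (\<forall>u\<in>set U. u \<noteq> 0) \<and> mass k c ws \<noteq> 0})"

definition map_norm :: "nat \<Rightarrow> nat \<Rightarrow> ('a::real_inner \<Rightarrow> 'b::real_inner) \<Rightarrow> ereal" where
  "map_norm k r f = Max ((\<lambda>j. map_seminorm k j f) ` {..r})"

end

(*
  The pullback is adjoint to the pushforward: (f^* omega)(Delta) = omega(f_* Delta). Since the
  chain norm is the dual norm, |omega(Q)| <= |Q|^{natural j} |omega|^{natural j}, and
  |f_* Delta|^{natural j} <= ||f||_[j] whenever ||Delta||_j = 1; taking sups over Delta and
  maxima over j <= r gives the claim. The dual norm divides by |omega|^{natural j}, which is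
  positive for nonzero omega: expanding multilinearly in an orthonormal basis, a nonzero
  alternating form is nonzero on some orthonormal frame, a k-vector of mass 1.
*)

theory Submission
  imports Defs
begin

lemma chain_eval_pullback: "chain_eval (pullback f \<omega>) P = chain_eval \<omega> (push f P)"
  by (induction P) (auto simp: chain_eval_def push_def pullback_def)

lemma chain_eval_uminus: "chain_eval (\<lambda>p ws. - \<omega> p ws) P = - chain_eval \<omega> P"
  by (induction P) (auto simp: chain_eval_def)

lemma chain_eval_zero_form: "(\<And>p ws. \<omega> p ws = 0) \<Longrightarrow> chain_eval \<omega> P = 0"
  by (induction P) (auto simp: chain_eval_def)

lemma is_kform_uminus: "is_kform k \<omega> \<Longrightarrow> is_kform k (\<lambda>p ws. - \<omega> p ws)"
  unfolding is_kform_def by (auto intro: linear_compose_neg[unfolded o_def])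

lemma form_seminorm_uminus: "form_seminorm k j (\<lambda>p ws. - \<omega> p ws) = form_seminorm k j \<omega>"
  unfolding form_seminorm_def chain_eval_uminus by simp

lemma natural_norm_uminus: "natural_norm k r (\<lambda>p ws. - \<omega> p ws) = natural_norm k r \<omega>"
  unfolding natural_norm_def form_seminorm_uminus by simp

lemma form_seminorm_nonneg: "0 \<le> form_seminorm k j \<omega>"
  unfolding form_seminorm_def by (rule Sup_upper) simp

lemma form_seminorm_ge:
  "length U = j \<Longrightarrow> dnorm k U c ws = 1 \<Longrightarrow>
    ereal \<bar>chain_eval \<omega> (delta U [(c, p, ws)])\<bar> \<le> form_seminorm k j \<omega>"
  unfolding form_seminorm_def by (rule Sup_upper) blast

lemma form_seminorm_le_natural_norm: "j \<le> r \<Longrightarrow> form_seminorm k j \<omega> \<le> natural_norm k r \<omega>"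
  unfolding natural_norm_def by (rule Max_ge) auto

lemma natural_norm_nonneg: "0 \<le> natural_norm k r \<omega>"
  using form_seminorm_nonneg form_seminorm_le_natural_norm[of 0 r] by (blast intro: order_trans)

lemma natural_norm_mono: "j \<le> r \<Longrightarrow> natural_norm k j \<omega> \<le> natural_norm k r \<omega>"
  unfolding natural_norm_def by (subst Max_le_iff) (auto intro!: Max_ge)

lemma map_seminorm_nonneg: "0 \<le> map_seminorm k j f"
  unfolding map_seminorm_def by (rule Sup_upper) simp

lemma map_seminorm_le_map_norm: "j \<le> r \<Longrightarrow> map_seminorm k j f \<le> map_norm k r f"
  unfolding map_norm_def by (rule Max_ge) auto

lemma map_norm_nonneg: "0 \<le> map_norm k r f"
  using map_seminorm_nonneg map_seminorm_le_map_norm[of 0 r] by (blast intro: order_trans)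

lemma chain_norm_nonneg: "0 \<le> chain_norm k j P"
  unfolding chain_norm_def by (rule Sup_upper) simp

lemma gram_det_Basis:
  fixes e :: "nat \<Rightarrow> 'a::euclidean_space"
  assumes Basis: "\<And>l. l < k \<Longrightarrow> e l \<in> Basis" and inj: "inj_on e {..<k}"
  shows "gram_det k e = 1"
proof -
  let ?term = "\<lambda>\<sigma>. of_int (sign \<sigma>) * (\<Prod>i<k. inner (e i) (e (\<sigma> i))) :: real"
  have off_diagonal: "?term \<sigma> = 0" if "\<sigma> permutes {..<k}" "\<sigma> \<noteq> id" for \<sigma>
  proof -
    obtain i where i: "\<sigma> i \<noteq> i" using \<open>\<sigma> \<noteq> id\<close> by (metis eq_id_iff)
    then have "i < k" "\<sigma> i < k"
      using \<open>\<sigma> permutes {..<k}\<close> by (auto dest: permutes_not_in permutes_in_image)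
    moreover have "e i \<noteq> e (\<sigma> i)" using inj i \<open>i < k\<close> \<open>\<sigma> i < k\<close> by (auto dest: inj_onD)
    ultimately have "inner (e i) (e (\<sigma> i)) = 0" using Basis by (simp add: inner_not_same_Basis)
    with \<open>i < k\<close> show ?thesis by (auto intro: prod_zero)
  qed
  have "gram_det k e = ?term id + sum ?term ({\<sigma>. \<sigma> permutes {..<k}} - {id})"
    unfolding gram_det_def by (rule sum.remove) (simp_all add: finite_permutations)
  also have "sum ?term ({\<sigma>. \<sigma> permutes {..<k}} - {id}) = 0"
    using off_diagonal by (intro sum.neutral) blast
  also have "?term id = 1" using Basis by (simp add: inner_Basis)
  finally show ?thesis by simp
qed

lemma kform_expand_slot:
  fixes \<omega> :: "'a::euclidean_space \<Rightarrow> (nat \<Rightarrow> 'a) \<Rightarrow> real"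
  assumes "is_kform k \<omega>" and "i < k"
  shows "\<omega> p ws = (\<Sum>b\<in>Basis. (ws i \<bullet> b) * \<omega> p (ws(i := b)))"
proof -
  have lin: "linear (\<lambda>v. \<omega> p (ws(i := v)))" using assms unfolding is_kform_def by blast
  have "\<omega> p ws = \<omega> p (ws(i := (\<Sum>b\<in>Basis. (ws i \<bullet> b) *\<^sub>R b)))"
    by (simp add: euclidean_representation)
  also have "\<dots> = (\<Sum>b\<in>Basis. (ws i \<bullet> b) * \<omega> p (ws(i := b)))"
    by (simp add: linear_sum[OF lin] linear_scale[OF lin])
  finally show ?thesis .
qed

lemma kform_eq_0_if_vanishes_on_Basis:
  fixes \<omega> :: "'a::euclidean_space \<Rightarrow> (nat \<Rightarrow> 'a) \<Rightarrow> real"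
  assumes kform: "is_kform k \<omega>"
    and vanishes: "\<And>e. (\<And>l. l < k \<Longrightarrow> e l \<in> Basis) \<Longrightarrow> \<omega> p e = 0"
  shows "\<omega> p ws = 0"
proof -
  have "\<omega> p ws = 0" if "m \<le> k" "\<And>l. m \<le> l \<Longrightarrow> l < k \<Longrightarrow> ws l \<in> Basis" for m ws
    using that
  proof (induction m arbitrary: ws)
    case 0
    then show ?case using vanishes by simp
  next
    case (Suc m)
    have "\<omega> p (ws(m := b)) = 0" if "b \<in> Basis" for b
      using Suc.prems that by (intro Suc.IH) (auto simp: Suc_le_eq)
    then show ?case
      using kform_expand_slot[OF kform, of m p ws] Suc.prems by simp
  qed
  from this[of k] show ?thesis by simp
qed

lemma kform_nonzero_on_Basis_frame:
  fixes \<omega> :: "'a::euclidean_space \<Rightarrow> (nat \<Rightarrow> 'a) \<Rightarrow> real"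
  assumes kform: "is_kform k \<omega>" and "\<omega> p ws \<noteq> 0"
  obtains e where "\<And>l. l < k \<Longrightarrow> e l \<in> Basis" "inj_on e {..<k}" "\<omega> p e \<noteq> 0"
proof -
  obtain e where Basis: "\<And>l. l < k \<Longrightarrow> e l \<in> Basis" and "\<omega> p e \<noteq> 0"
    using kform_eq_0_if_vanishes_on_Basis[OF kform] \<open>\<omega> p ws \<noteq> 0\<close> by blast
  moreover have "inj_on e {..<k}"
  proof (rule inj_onI, rule ccontr)
    fix i j assume "i \<in> {..<k}" "j \<in> {..<k}" "e i = e j" "i \<noteq> j"
    then have "\<omega> p e = 0" using kform unfolding is_kform_def by blast
    with \<open>\<omega> p e \<noteq> 0\<close> show False by simp
  qed
  ultimately show ?thesis using that by blast
qed

lemma form_seminorm_0_pos: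
  fixes \<omega> :: "'a::euclidean_space \<Rightarrow> (nat \<Rightarrow> 'a) \<Rightarrow> real"
  assumes "is_kform k \<omega>" and "\<omega> p ws \<noteq> 0"
  shows "0 < form_seminorm k 0 \<omega>"
proof -
  obtain e where "\<And>l. l < k \<Longrightarrow> e l \<in> Basis" "inj_on e {..<k}" and nonzero: "\<omega> p e \<noteq> 0"
    using kform_nonzero_on_Basis_frame assms by blast
  then have "dnorm k [] 1 e = 1" by (simp add: dnorm_def mass_def gram_det_Basis)
  then have "ereal \<bar>chain_eval \<omega> (delta [] [(1, p, e)])\<bar> \<le> form_seminorm k 0 \<omega>"
    by (intro form_seminorm_ge) simp_all
  moreover have "chain_eval \<omega> (delta [] [(1, p, e)]) = \<omega> p e"
    by (simp add: delta_def chain_eval_def)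
  ultimately show ?thesis using nonzero by (metis zero_less_abs_iff ereal_less(2) order_less_le_trans)
qed

lemma abs_chain_eval_le_chain_norm:
  fixes \<omega> :: "'a::euclidean_space \<Rightarrow> (nat \<Rightarrow> 'a) \<Rightarrow> real"
  assumes kform: "is_kform k \<omega>" and finite: "natural_norm k j \<omega> < \<infinity>"
  shows "ereal \<bar>chain_eval \<omega> P\<bar> \<le> chain_norm k j P * natural_norm k j \<omega>"
proof (cases "\<forall>p ws. \<omega> p ws = 0")
  case True
  then show ?thesis
    using chain_norm_nonneg[of k j P] natural_norm_nonneg[of k j \<omega>]
    by (simp add: chain_eval_zero_form zero_ereal_def[symmetric])
next
  case False
  then obtain p ws where nonzero: "\<omega> p ws \<noteq> 0" by blast
  have "0 < natural_norm k j \<omega>"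
    using form_seminorm_0_pos[OF kform nonzero] form_seminorm_le_natural_norm[of 0 j]
    by (rule order_less_le_trans) simp
  with finite obtain a where a: "natural_norm k j \<omega> = ereal a" "0 < a"
    by (cases "natural_norm k j \<omega>") auto
  have dual: "ereal (chain_eval \<eta> P / a) \<le> chain_norm k j P"
    if "\<eta> \<in> {\<omega>, \<lambda>p ws. - \<omega> p ws}" for \<eta>
    unfolding chain_norm_def
  proof (rule Sup_upper, intro insertI2 CollectI exI conjI)
    show "is_kform k \<eta>" "natural_norm k j \<eta> < \<infinity>" "\<eta> p ws \<noteq> 0"
      using that kform finite nonzero by (auto simp: is_kform_uminus natural_norm_uminus)
    show "ereal (chain_eval \<eta> P / a) = ereal (chain_eval \<eta> P / real_of_ereal (natural_norm k j \<eta>))"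
      using that a by (auto simp: natural_norm_uminus)
  qed
  have "ereal (\<bar>chain_eval \<omega> P\<bar> / a) \<le> chain_norm k j P"
    using dual[of \<omega>] dual[of "\<lambda>p ws. - \<omega> p ws"]
    by (cases "0 \<le> chain_eval \<omega> P") (simp_all add: chain_eval_uminus)
  then have "ereal (\<bar>chain_eval \<omega> P\<bar> / a) * ereal a \<le> chain_norm k j P * ereal a"
    using a by (intro ereal_mult_right_mono) simp_all
  then show ?thesis using a by simp
qed

lemma chain_norm_push_delta_le:
  assumes "length U = j" and pos: "0 < dnorm k U c ws"
  shows "chain_norm k j (push f (delta U [(c, x, ws)])) \<le> map_seminorm k j f * ereal (dnorm k U c ws)"
proof -
  have "prod_list (map norm U) \<noteq> 0" and "mass k c ws \<noteq> 0"
    using pos by (auto simp: dnorm_def)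
  then have "\<forall>u\<in>set U. u \<noteq> 0" and "mass k c ws \<noteq> 0"
    by (auto simp: prod_list_zero_iff)
  then have "chain_norm k j (push f (delta U [(c, x, ws)])) / ereal (dnorm k U c ws) \<le> map_seminorm k j f"
    unfolding map_seminorm_def using \<open>length U = j\<close> by (intro Sup_upper) blast
  then show ?thesis using pos by (simp add: ereal_divide_le_pos mult.commute)
qed

lemma form_seminorm_pullback_le:
  fixes f :: "'a::real_inner \<Rightarrow> 'b::euclidean_space"
  assumes kform: "is_kform k \<omega>" and finite: "natural_norm k j \<omega> < \<infinity>"
  shows "form_seminorm k j (pullback f \<omega>) \<le> map_seminorm k j f * natural_norm k j \<omega>"
  unfolding form_seminorm_def
proof (rule Sup_least)
  have bound_nonneg: "0 \<le> map_seminorm k j f * natural_norm k j \<omega>"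
    using map_seminorm_nonneg[of k j f] natural_norm_nonneg[of k j \<omega>] by simp
  fix y assume "y \<in> insert 0 {ereal \<bar>chain_eval (pullback f \<omega>) (delta U [(c, p, ws)])\<bar> | U p c ws.
      length U = j \<and> dnorm k U c ws = 1}"
  then consider "y = 0"
    | U p c ws where "y = ereal \<bar>chain_eval \<omega> (push f (delta U [(c, p, ws)]))\<bar>"
        "length U = j" "dnorm k U c ws = 1"
    by (auto simp: chain_eval_pullback)
  then show "y \<le> map_seminorm k j f * natural_norm k j \<omega>"
  proof cases
    case 1
    with bound_nonneg show ?thesis by simp
  next
    case (2 U p c ws)
    have "y \<le> chain_norm k j (push f (delta U [(c, p, ws)])) * natural_norm k j \<omega>"
      unfolding 2(1) using kform finite by (rule abs_chain_eval_le_chain_norm)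
    also have "\<dots> \<le> map_seminorm k j f * natural_norm k j \<omega>"
      using chain_norm_push_delta_le[OF 2(2), of k c ws f p] 2(3)
      by (intro ereal_mult_right_mono natural_norm_nonneg) simp_all
    finally show ?thesis .
  qed
qed

theorem mainTheorem5:
  fixes f :: "'a::euclidean_space \<Rightarrow> 'b::euclidean_space"
    and \<omega> :: "'b \<Rightarrow> (nat \<Rightarrow> 'b) \<Rightarrow> real"
    and k r :: nat
  assumes "smooth_map f"
    and "is_kform k \<omega>"
    and "natural_norm k r \<omega> < \<infinity>"
  shows "natural_norm k r (pullback f \<omega>) \<le> map_norm k r f * natural_norm k r \<omega>"
proof -
  have "form_seminorm k j (pullback f \<omega>) \<le> map_norm k r f * natural_norm k r \<omega>" if "j \<le> r" for j
  proof -
    have finite: "natural_norm k j \<omega> < \<infinity>"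
      using natural_norm_mono[OF \<open>j \<le> r\<close>] assms(3) by (rule order.strict_trans1)
    have "form_seminorm k j (pullback f \<omega>) \<le> map_seminorm k j f * natural_norm k j \<omega>"
      using assms(2) finite by (rule form_seminorm_pullback_le)
    also have "\<dots> \<le> map_norm k r f * natural_norm k r \<omega>"
      using that
      by (intro ereal_mult_mono map_norm_nonneg natural_norm_nonneg
          map_seminorm_le_map_norm natural_norm_mono)
    finally show ?thesis .
  qed
  then show ?thesis unfolding natural_norm_def[of k r "pullback f \<omega>"] by (subst Max_le_iff) auto
qed

end
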